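(* Let $\mathcal{X}$ be a subset of a normed space, $\mathcal{H}$ an RKHS on $\mathcal{X}$ whose kernel is radial, $\mathfrak{K}(x,y)=\mathfrak{K}_0(\|x-y\|)$ with $\mathfrak{K}_0$ injective, and let $F:\mathcal{X}\to\mathcal{X}$ be a bijection. Then the Koopman operator $\mathcal{K}_F$ on $\mathcal{H}$ is unitary if and only if $F$ is an isometry, i.e. $\|F(x)-F(y)\|=\|x-y\|$ for all $x,y\in\mathcal{X}$.
   Context: $\mathcal{H}$ is a reproducing kernel Hilbert space of complex-valued functions on $\mathcal{X}$ with kernel $\mathfrak{K}$. The Koopman operator is $\mathcal{K}_Fg=g\circ F$ with domain $\{g\in\mathcal{H}:g\circ F\in\mathcal{H}\}$; unitary means bounded, everywhere defined, with $\mathcal{K}_F\mathcal{K}_F^*=\mathcal{K}_F^*\mathcal{K}_F=I$. *)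

theory Defs
  imports "HOL-Analysis.Analysis"
begin

text \<open>Functions are represented as total functions that vanish outside X (extensional
  convention).\<close>

definition ksec :: "'a set \<Rightarrow> ('a \<Rightarrow> 'a \<Rightarrow> complex) \<Rightarrow> 'a \<Rightarrow> ('a \<Rightarrow> complex)" where
  "ksec X K y = (\<lambda>x. if x \<in> X then K x y else 0)"

definition hnorm :: "(('a \<Rightarrow> complex) \<Rightarrow> ('a \<Rightarrow> complex) \<Rightarrow> complex) \<Rightarrow> ('a \<Rightarrow> complex) \<Rightarrow> real" where
  "hnorm ip f = sqrt (Re (ip f f))"

definition is_rkhs ::
  "'a set \<Rightarrow> ('a \<Rightarrow> complex) set \<Rightarrow> (('a \<Rightarrow> complex) \<Rightarrow> ('a \<Rightarrow> complex) \<Rightarrow> complex)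
     \<Rightarrow> ('a \<Rightarrow> 'a \<Rightarrow> complex) \<Rightarrow> bool" where
  "is_rkhs X H ip K \<longleftrightarrow>
     \<comment> \<open>functions on X (vanishing outside X)\<close>
     (\<forall>f\<in>H. \<forall>x. x \<notin> X \<longrightarrow> f x = 0) \<and>
     \<comment> \<open>complex vector space\<close>
     (\<lambda>x. 0) \<in> H \<and>
     (\<forall>f\<in>H. \<forall>g\<in>H. (\<lambda>x. f x + g x) \<in> H) \<and>
     (\<forall>c. \<forall>f\<in>H. (\<lambda>x. c * f x) \<in> H) \<and>
     \<comment> \<open>inner product\<close>
     (\<forall>f\<in>H. \<forall>g\<in>H. \<forall>h\<in>H. ip (\<lambda>x. f x + g x) h = ip f h + ip g h) \<and>
     (\<forall>c. \<forall>f\<in>H. \<forall>g\<in>H. ip (\<lambda>x. c * f x) g = c * ip f g) \<and>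
     (\<forall>f\<in>H. \<forall>g\<in>H. ip g f = cnj (ip f g)) \<and>
     (\<forall>f\<in>H. Im (ip f f) = 0 \<and> Re (ip f f) \<ge> 0) \<and>
     (\<forall>f\<in>H. ip f f = 0 \<longrightarrow> f = (\<lambda>x. 0)) \<and>
     \<comment> \<open>completeness\<close>
     (\<forall>s. (\<forall>n. s n \<in> H) \<longrightarrow>
          (\<forall>e>0. \<exists>N. \<forall>m\<ge>N. \<forall>n\<ge>N. hnorm ip (\<lambda>x. s m x - s n x) < e) \<longrightarrow>
          (\<exists>l\<in>H. (\<lambda>n. hnorm ip (\<lambda>x. s n x - l x)) \<longlonglongrightarrow> 0)) \<and>
     \<comment> \<open>reproducing kernel\<close>
     (\<forall>y\<in>X. ksec X K y \<in> H) \<and>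
     (\<forall>f\<in>H. \<forall>y\<in>X. f y = ip f (ksec X K y))"

definition koopman :: "'a set \<Rightarrow> ('a \<Rightarrow> 'a) \<Rightarrow> ('a \<Rightarrow> complex) \<Rightarrow> ('a \<Rightarrow> complex)" where
  "koopman X F g = (\<lambda>x. if x \<in> X then g (F x) else 0)"

definition unitary_op ::
  "('a \<Rightarrow> complex) set \<Rightarrow> (('a \<Rightarrow> complex) \<Rightarrow> ('a \<Rightarrow> complex) \<Rightarrow> complex)
     \<Rightarrow> (('a \<Rightarrow> complex) \<Rightarrow> ('a \<Rightarrow> complex)) \<Rightarrow> bool" where
  "unitary_op H ip T \<longleftrightarrow>
     (\<forall>f\<in>H. T f \<in> H) \<and>
     (\<forall>f\<in>H. \<forall>g\<in>H. T (\<lambda>x. f x + g x) = (\<lambda>x. T f x + T g x)) \<and>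
     (\<forall>c. \<forall>f\<in>H. T (\<lambda>x. c * f x) = (\<lambda>x. c * T f x)) \<and>
     (\<exists>C. \<forall>f\<in>H. hnorm ip (T f) \<le> C * hnorm ip f) \<and>
     (\<exists>S. (\<forall>g\<in>H. S g \<in> H) \<and>
          (\<forall>f\<in>H. \<forall>g\<in>H. ip (T f) g = ip f (S g)) \<and>
          (\<forall>f\<in>H. T (S f) = f \<and> S (T f) = f))"

end

(*
  If K_F is unitary, its adjoint sends the kernel section k_y to k_(F y), since
  <u, K_F^* k_y> = (u o F)(y) = <u, k_(F y)>; hence
  K(x, y) = <k_y, k_x> = <K_F^* k_y, K_F^* k_x> = K(F x, F y).
  Conversely, if K(F x, F y) = K(x, y) then K_F k_(F x) = k_x, so K_F preserves inner
  products on the span of the kernel sections. That span is dense: the projection theorem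
  gives an approximant whose residual is orthogonal to every k_y, hence vanishes on X by
  the reproducing property. By completeness K_F therefore maps H isometrically into H, and
  K_(F^-1) is its inverse and adjoint. For a radial kernel with injective profile,
  K(F x, F y) = K(x, y) says exactly that F is an isometry.
*)

theory Submission
  imports Defs
begin

section \<open>Hilbert spaces of functions\<close>

locale fun_hilbert_space =
  fixes H :: "('a \<Rightarrow> complex) set"
    and ip :: "('a \<Rightarrow> complex) \<Rightarrow> ('a \<Rightarrow> complex) \<Rightarrow> complex"
  assumes zero_mem: "(\<lambda>x. 0) \<in> H"
    and add_mem: "f \<in> H \<Longrightarrow> g \<in> H \<Longrightarrow> (\<lambda>x. f x + g x) \<in> H"
    and scale_mem: "f \<in> H \<Longrightarrow> (\<lambda>x. c * f x) \<in> H"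
    and ip_add_left: "f \<in> H \<Longrightarrow> g \<in> H \<Longrightarrow> h \<in> H \<Longrightarrow> ip (\<lambda>x. f x + g x) h = ip f h + ip g h"
    and ip_scale_left: "f \<in> H \<Longrightarrow> g \<in> H \<Longrightarrow> ip (\<lambda>x. c * f x) g = c * ip f g"
    and ip_commute: "f \<in> H \<Longrightarrow> g \<in> H \<Longrightarrow> ip g f = cnj (ip f g)"
    and ip_self_real: "f \<in> H \<Longrightarrow> Im (ip f f) = 0"
    and ip_self_nonneg: "f \<in> H \<Longrightarrow> 0 \<le> Re (ip f f)"
    and ip_self_eq_0: "f \<in> H \<Longrightarrow> ip f f = 0 \<Longrightarrow> f = (\<lambda>x. 0)"
    and complete: "(\<And>n. s n \<in> H) \<Longrightarrow>
      \<forall>e>0. \<exists>N. \<forall>m\<ge>N. \<forall>n\<ge>N. hnorm ip (\<lambda>x. s m x - s n x) < e \<Longrightarrow>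
      \<exists>l\<in>H. (\<lambda>n. hnorm ip (\<lambda>x. s n x - l x)) \<longlonglongrightarrow> 0"
begin

abbreviation sqnorm :: "('a \<Rightarrow> complex) \<Rightarrow> real" where
  "sqnorm f \<equiv> Re (ip f f)"

abbreviation hCauchy :: "(nat \<Rightarrow> 'a \<Rightarrow> complex) \<Rightarrow> bool" where
  "hCauchy s \<equiv> \<forall>e>0. \<exists>N. \<forall>m\<ge>N. \<forall>n\<ge>N. hnorm ip (\<lambda>x. s m x - s n x) < e"

abbreviation hdist :: "('a \<Rightarrow> complex) \<Rightarrow> ('a \<Rightarrow> complex) \<Rightarrow> real" where
  "hdist f g \<equiv> hnorm ip (\<lambda>x. f x - g x)"

lemma add_scale_mem: "f \<in> H \<Longrightarrow> g \<in> H \<Longrightarrow> (\<lambda>x. f x + c * g x) \<in> H"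
  using add_mem scale_mem by blast

lemma diff_mem: "f \<in> H \<Longrightarrow> g \<in> H \<Longrightarrow> (\<lambda>x. f x - g x) \<in> H"
  using add_scale_mem[of f g "-1"] by simp

lemma ip_add_right:
  assumes "f \<in> H" "g \<in> H" "h \<in> H"
  shows "ip h (\<lambda>x. f x + g x) = ip h f + ip h g"
proof -
  have "ip h (\<lambda>x. f x + g x) = cnj (ip (\<lambda>x. f x + g x) h)"
    using ip_commute add_mem assms by blast
  then show ?thesis
    using assms by (simp add: ip_add_left ip_commute[of h])
qed

lemma ip_scale_right:
  assumes "f \<in> H" "g \<in> H"
  shows "ip g (\<lambda>x. c * f x) = cnj c * ip g f"
proof -
  have "ip g (\<lambda>x. c * f x) = cnj (ip (\<lambda>x. c * f x) g)"
    using ip_commute scale_mem assms by blast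
  then show ?thesis
    using assms by (simp add: ip_scale_left ip_commute[of g])
qed

lemma ip_add_scale_left:
  "f \<in> H \<Longrightarrow> g \<in> H \<Longrightarrow> h \<in> H \<Longrightarrow> ip (\<lambda>x. f x + c * g x) h = ip f h + c * ip g h"
  by (simp add: ip_add_left scale_mem ip_scale_left)

lemma ip_add_scale_right:
  "f \<in> H \<Longrightarrow> g \<in> H \<Longrightarrow> h \<in> H \<Longrightarrow> ip h (\<lambda>x. f x + c * g x) = ip h f + cnj c * ip h g"
  by (simp add: ip_add_right scale_mem ip_scale_right)

lemma ip_diff_right: "f \<in> H \<Longrightarrow> g \<in> H \<Longrightarrow> h \<in> H \<Longrightarrow> ip h (\<lambda>x. f x - g x) = ip h f - ip h g"
  using ip_add_right[of f "\<lambda>x. (-1) * g x" h] ip_scale_right[of g h "-1"] scale_mem[of g "-1"]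
  by simp

lemma ip_zero_left: "f \<in> H \<Longrightarrow> ip (\<lambda>x. 0) f = 0"
  using ip_scale_left[of "\<lambda>x. 0" f 0] zero_mem by simp

lemma ip_zero_right: "f \<in> H \<Longrightarrow> ip f (\<lambda>x. 0) = 0"
  using ip_commute[OF zero_mem] ip_zero_left by simp

lemma ip_self: "f \<in> H \<Longrightarrow> ip f f = complex_of_real (sqnorm f)"
  using ip_self_real by (simp add: complex_eq_iff)

lemma sqnorm_eq_0: "f \<in> H \<Longrightarrow> sqnorm f = 0 \<Longrightarrow> f = (\<lambda>x. 0)"
  using ip_self ip_self_eq_0 by force

lemma sqnorm_add_scale:
  assumes "f \<in> H" "g \<in> H"
  shows "sqnorm (\<lambda>x. f x + c * g x) = sqnorm f + 2 * Re (cnj c * ip f g) + (cmod c)\<^sup>2 * sqnorm g"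
proof -
  have "ip (\<lambda>x. f x + c * g x) (\<lambda>x. f x + c * g x) =
      ip f f + cnj c * ip f g + c * cnj (ip f g) + c * cnj c * ip g g"
    using assms by (simp add: ip_add_scale_left ip_add_right ip_scale_right add_scale_mem
        scale_mem ip_commute[of f g] algebra_simps)
  moreover have "Re (c * cnj c * ip g g) = (cmod c)\<^sup>2 * sqnorm g"
    using ip_self[OF assms(2)] by (simp add: complex_mult_cnj cmod_def)
  ultimately show ?thesis by simp
qed

lemma sqnorm_scale: "f \<in> H \<Longrightarrow> sqnorm (\<lambda>x. c * f x) = (cmod c)\<^sup>2 * sqnorm f"
  using sqnorm_add_scale[OF zero_mem, of f c] ip_zero_left zero_mem by simp

lemma parallelogram:
  assumes "f \<in> H" "g \<in> H"
  shows "sqnorm (\<lambda>x. f x + g x) + sqnorm (\<lambda>x. f x - g x) = 2 * sqnorm f + 2 * sqnorm g"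
  using sqnorm_add_scale[OF assms, of 1] sqnorm_add_scale[OF assms, of "-1"] by simp

lemma hnorm_nonneg: "f \<in> H \<Longrightarrow> 0 \<le> hnorm ip f"
  by (simp add: hnorm_def ip_self_nonneg)

lemma hnorm_power2:
  assumes "f \<in> H"
  shows "(hnorm ip f)\<^sup>2 = sqnorm f"
  by (simp add: hnorm_def ip_self_nonneg[OF assms])

lemma hnorm_le_iff_sqnorm_le: "hnorm ip f \<le> hnorm ip g \<longleftrightarrow> sqnorm f \<le> sqnorm g"
  by (simp add: hnorm_def)

lemma hnorm_scale: "f \<in> H \<Longrightarrow> hnorm ip (\<lambda>x. c * f x) = cmod c * hnorm ip f"
  by (simp add: hnorm_def sqnorm_scale real_sqrt_mult)

lemma hdist_commute: "f \<in> H \<Longrightarrow> g \<in> H \<Longrightarrow> hdist f g = hdist g f"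
  using hnorm_scale[OF diff_mem, of f g "-1"] by (simp add: algebra_simps)

lemma Cauchy_Schwarz_ineq:
  assumes "f \<in> H" "g \<in> H"
  shows "cmod (ip f g) \<le> hnorm ip f * hnorm ip g"
proof (cases "sqnorm g = 0")
  case True
  then show ?thesis using sqnorm_eq_0 ip_zero_right assms by (simp add: hnorm_nonneg)
next
  case False
  then have g: "sqnorm g > 0" using ip_self_nonneg[OF assms(2)] by simp
  define c where "c = - ip f g / complex_of_real (sqnorm g)"
  have "cnj c * ip f g = - complex_of_real ((cmod (ip f g))\<^sup>2 / sqnorm g)"
    using complex_norm_square[of "ip f g"] by (simp add: c_def mult.commute)
  moreover have "(cmod c)\<^sup>2 = (cmod (ip f g))\<^sup>2 / (sqnorm g)\<^sup>2"
    using g by (simp add: c_def norm_divide power_divide)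
  ultimately have "0 \<le> sqnorm f - (cmod (ip f g))\<^sup>2 / sqnorm g"
    using ip_self_nonneg[OF add_scale_mem[OF assms, of c]] sqnorm_add_scale[OF assms, of c] g
    by (simp add: power2_eq_square)
  then have "(cmod (ip f g))\<^sup>2 \<le> (hnorm ip f * hnorm ip g)\<^sup>2"
    using g by (simp add: field_simps power_mult_distrib hnorm_power2 assms)
  then show ?thesis
    using hnorm_nonneg assms by (meson mult_nonneg_nonneg power2_le_imp_le)
qed

lemma hnorm_triangle:
  assumes "f \<in> H" "g \<in> H"
  shows "hnorm ip (\<lambda>x. f x + g x) \<le> hnorm ip f + hnorm ip g"
proof -
  have "Re (ip f g) \<le> hnorm ip f * hnorm ip g"
    using Cauchy_Schwarz_ineq[OF assms] complex_Re_le_cmod order_trans by blast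
  then have "sqnorm (\<lambda>x. f x + g x) \<le> (hnorm ip f + hnorm ip g)\<^sup>2"
    using sqnorm_add_scale[OF assms, of 1] by (simp add: power2_sum hnorm_power2 assms)
  then have "sqrt (sqnorm (\<lambda>x. f x + g x)) \<le> \<bar>hnorm ip f + hnorm ip g\<bar>"
    using real_sqrt_le_mono by fastforce
  then show ?thesis
    using hnorm_nonneg assms by (simp add: hnorm_def[of ip "\<lambda>x. f x + g x"])
qed

lemma hdist_triangle:
  "f \<in> H \<Longrightarrow> g \<in> H \<Longrightarrow> h \<in> H \<Longrightarrow> hdist f h \<le> hdist f g + hdist g h"
  using hnorm_triangle[OF diff_mem diff_mem, of f g g h] by simp

lemma hdist_reverse_triangle:
  "f \<in> H \<Longrightarrow> g \<in> H \<Longrightarrow> h \<in> H \<Longrightarrow> \<bar>hdist f g - hdist f h\<bar> \<le> hdist g h"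
  using hdist_triangle[of f g h] hdist_triangle[of f h g] hdist_commute[of g h] by linarith

lemma convergent_imp_hCauchy:
  assumes "\<And>n. s n \<in> H" "l \<in> H" and lim: "(\<lambda>n. hdist (s n) l) \<longlonglongrightarrow> 0"
  shows "hCauchy s"
proof (intro allI impI)
  fix e :: real assume "e > 0"
  then obtain N where N: "\<And>n. n \<ge> N \<Longrightarrow> hdist (s n) l < e / 2"
    using order_tendstoD(2)[OF lim, of "e / 2"] by (auto simp: eventually_sequentially)
  have "hdist (s m) (s n) < e" if "m \<ge> N" "n \<ge> N" for m n
    using hdist_triangle[of "s m" l "s n"] hdist_commute[of l "s n"] N[OF that(1)] N[OF that(2)] assms
    by simp
  then show "\<exists>N. \<forall>m\<ge>N. \<forall>n\<ge>N. hdist (s m) (s n) < e" by blast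
qed

lemma tendsto_hdist:
  assumes "a \<in> H" "\<And>n. s n \<in> H" "l \<in> H" and lim: "(\<lambda>n. hdist (s n) l) \<longlonglongrightarrow> 0"
  shows "(\<lambda>n. hdist a (s n)) \<longlonglongrightarrow> hdist a l"
proof -
  have "(\<lambda>n. hdist a (s n) - hdist a l) \<longlonglongrightarrow> 0"
    using hdist_reverse_triangle[of a "s _" l] assms
    by (intro Lim_null_comparison[OF always_eventually lim]) simp
  then show ?thesis by (rule LIM_zero_cancel)
qed

lemma tendsto_ip_right:
  assumes "f \<in> H" "\<And>n. s n \<in> H" "g \<in> H" and lim: "(\<lambda>n. hdist (s n) g) \<longlonglongrightarrow> 0"
  shows "(\<lambda>n. ip f (s n)) \<longlonglongrightarrow> ip f g"
proof -
  have "(\<lambda>n. ip f (s n) - ip f g) \<longlonglongrightarrow> 0"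
  proof (rule Lim_null_comparison[OF always_eventually])
    show "\<forall>n. norm (ip f (s n) - ip f g) \<le> hnorm ip f * hdist (s n) g"
      using Cauchy_Schwarz_ineq[OF assms(1) diff_mem[OF assms(2,3)]] ip_diff_right[OF assms(2,3,1)]
      by metis
    show "(\<lambda>n. hnorm ip f * hdist (s n) g) \<longlonglongrightarrow> 0"
      using tendsto_mult[OF tendsto_const lim] by simp
  qed
  then show ?thesis by (rule LIM_zero_cancel)
qed

lemma ip_eq_0_if_minimal:
  assumes r: "r \<in> H" and k: "k \<in> H"
    and min: "\<And>t. hnorm ip r \<le> hnorm ip (\<lambda>x. r x + t * k x)"
  shows "ip r k = 0"
proof -
  define s where "s = 1 / (sqnorm k + 1)"
  have s: "s > 0" "s * sqnorm k < 1"
    using ip_self_nonneg[OF k] by (auto simp: s_def field_simps)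
  define t where "t = - complex_of_real s * ip r k"
  have "cnj t * ip r k = - complex_of_real (s * (cmod (ip r k))\<^sup>2)"
    using complex_norm_square[of "ip r k"] by (simp add: t_def mult.commute)
  moreover have "(cmod t)\<^sup>2 = s\<^sup>2 * (cmod (ip r k))\<^sup>2"
    using s by (simp add: t_def norm_mult power_mult_distrib)
  ultimately have "0 \<le> s * (cmod (ip r k))\<^sup>2 * (s * sqnorm k - 2)"
    using min[of t] sqnorm_add_scale[OF r k, of t]
    by (simp add: hnorm_le_iff_sqnorm_le add_scale_mem r k algebra_simps power2_eq_square)
  then show ?thesis
    using s by (simp add: mult_le_0_iff zero_le_mult_iff)
qed

lemma apollonius:
  assumes f: "f \<in> H" and a: "a \<in> H" and b: "b \<in> H"
  shows "sqnorm (\<lambda>x. a x - b x) = 2 * sqnorm (\<lambda>x. f x - a x) + 2 * sqnorm (\<lambda>x. f x - b x)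
           - 4 * sqnorm (\<lambda>x. f x - (1 / 2) * (a x + b x))"
proof -
  have mid: "(\<lambda>x. f x - (1 / 2) * (a x + b x)) \<in> H"
    using f a b by (intro diff_mem scale_mem add_mem)
  have "(\<lambda>x. (f x - b x) + (f x - a x)) = (\<lambda>x. 2 * (f x - (1 / 2) * (a x + b x)))"
    by (auto simp: algebra_simps)
  then have "sqnorm (\<lambda>x. (f x - b x) + (f x - a x)) = 4 * sqnorm (\<lambda>x. f x - (1 / 2) * (a x + b x))"
    using sqnorm_scale[OF mid, of 2] by simp
  moreover have "(\<lambda>x. (f x - b x) - (f x - a x)) = (\<lambda>x. a x - b x)"
    by auto
  ultimately show ?thesis
    using parallelogram[OF diff_mem[OF f b] diff_mem[OF f a]] by simp
qed

definition is_subspace :: "('a \<Rightarrow> complex) set \<Rightarrow> bool" where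
  "is_subspace V \<longleftrightarrow> V \<subseteq> H \<and> (\<lambda>x. 0) \<in> V \<and>
     (\<forall>f\<in>V. \<forall>g\<in>V. (\<lambda>x. f x + g x) \<in> V) \<and> (\<forall>f\<in>V. \<forall>c. (\<lambda>x. c * f x) \<in> V)"

lemma is_subspaceD:
  assumes "is_subspace V"
  shows "V \<subseteq> H" "(\<lambda>x. 0) \<in> V" "f \<in> V \<Longrightarrow> g \<in> V \<Longrightarrow> (\<lambda>x. f x + g x) \<in> V"
    "f \<in> V \<Longrightarrow> (\<lambda>x. c * f x) \<in> V"
  using assms unfolding is_subspace_def by auto

lemma is_subspace_diff:
  assumes "is_subspace V" "f \<in> V" "g \<in> V"
  shows "(\<lambda>x. f x - g x) \<in> V"
  using is_subspaceD(3)[OF assms(1,2) is_subspaceD(4)[OF assms(1,3), of "-1"]] by simp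

lemma exists_minimizing_sequence:
  assumes V: "is_subspace V" and g: "g \<in> H"
  obtains v d where "\<And>n. v n \<in> V" "\<And>w. w \<in> V \<Longrightarrow> d \<le> hdist g w"
    "(\<lambda>n. hdist g (v n)) \<longlonglongrightarrow> d"
proof -
  let ?D = "(\<lambda>w. hdist g w) ` V"
  have ne: "?D \<noteq> {}"
    using is_subspaceD(2)[OF V] by blast
  have bdd: "bdd_below ?D"
  proof (rule bdd_belowI)
    fix z assume "z \<in> ?D"
    then show "0 \<le> z"
      using is_subspaceD(1)[OF V] g hnorm_nonneg diff_mem by blast
  qed
  have "Inf ?D \<in> closure ?D"
    using closure_contains_Inf[OF ne bdd] .
  then obtain s where s: "\<And>n. s n \<in> ?D" "s \<longlonglongrightarrow> Inf ?D"
    unfolding closure_sequential by blast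
  then have "\<forall>n. \<exists>w. w \<in> V \<and> s n = hdist g w"
    by blast
  then obtain v where v: "\<And>n. v n \<in> V" "\<And>n. s n = hdist g (v n)"
    by metis
  show thesis
  proof (rule that)
    have "(\<lambda>n. hdist g (v n)) = s"
      using v(2) by (simp add: fun_eq_iff)
    then show "(\<lambda>n. hdist g (v n)) \<longlonglongrightarrow> Inf ?D"
      using s(2) by simp
  qed (use v(1) cInf_lower[OF _ bdd] in auto)
qed

lemma minimizing_sequence_hCauchy:
  assumes V: "is_subspace V" and g: "g \<in> H" and v: "\<And>n. v n \<in> V"
    and d: "\<And>w. w \<in> V \<Longrightarrow> d \<le> hdist g w" and lim: "(\<lambda>n. hdist g (v n)) \<longlonglongrightarrow> d"
  shows "hCauchy v"
proof (intro allI impI)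
  fix e :: real assume "e > 0"
  have vH: "v n \<in> H" for n
    using is_subspaceD(1)[OF V] v by blast
  have "d \<ge> 0"
    using LIMSEQ_le_const[OF lim] hnorm_nonneg diff_mem g vH by blast
  have "eventually (\<lambda>n. (hdist g (v n))\<^sup>2 < d\<^sup>2 + e\<^sup>2 / 4) sequentially"
    using order_tendstoD(2)[OF tendsto_power[OF lim]] \<open>e > 0\<close> by simp
  then obtain N where N0: "\<forall>n\<ge>N. (hdist g (v n))\<^sup>2 < d\<^sup>2 + e\<^sup>2 / 4"
    unfolding eventually_sequentially by blast
  have N: "sqnorm (\<lambda>x. g x - v n x) < d\<^sup>2 + e\<^sup>2 / 4" if "n \<ge> N" for n
    using N0 that unfolding hnorm_power2[OF diff_mem[OF g vH]] by blast
  have "hdist (v m) (v n) < e" if "m \<ge> N" "n \<ge> N" for m n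
  proof -
    let ?w = "\<lambda>x. (1 / 2) * (v m x + v n x)"
    have "?w \<in> V"
      using is_subspaceD(3,4)[OF V] v by blast
    then have "d\<^sup>2 \<le> (hdist g ?w)\<^sup>2"
      using d \<open>d \<ge> 0\<close> power_mono by blast
    also have "\<dots> = sqnorm (\<lambda>x. g x - ?w x)"
      using \<open>?w \<in> V\<close> is_subspaceD(1)[OF V] g by (intro hnorm_power2 diff_mem) auto
    finally have "d\<^sup>2 \<le> sqnorm (\<lambda>x. g x - ?w x)" .
    then have "sqnorm (\<lambda>x. v m x - v n x) < e\<^sup>2"
      using apollonius[OF g vH vH, of m n] N[OF that(1)] N[OF that(2)] by simp
    then show ?thesis
      using \<open>e > 0\<close> hnorm_power2[OF diff_mem[OF vH vH]] by (metis power_less_imp_less_base less_le)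
  qed
  then show "\<exists>N. \<forall>m\<ge>N. \<forall>n\<ge>N. hdist (v m) (v n) < e" by blast
qed

lemma orthogonal_projection_onto_closure:
  assumes V: "is_subspace V" and g: "g \<in> H"
  obtains v l where "\<And>n. v n \<in> V" "l \<in> H" "(\<lambda>n. hdist (v n) l) \<longlonglongrightarrow> 0"
    "\<And>w. w \<in> V \<Longrightarrow> ip (\<lambda>x. g x - l x) w = 0"
proof -
  obtain v d where v: "\<And>n. v n \<in> V" and d: "\<And>w. w \<in> V \<Longrightarrow> d \<le> hdist g w"
    and lim_d: "(\<lambda>n. hdist g (v n)) \<longlonglongrightarrow> d"
    using exists_minimizing_sequence[OF V g] by blast
  have vH: "v n \<in> H" for n
    using is_subspaceD(1)[OF V] v by blast
  obtain l where l: "l \<in> H" and lim: "(\<lambda>n. hdist (v n) l) \<longlonglongrightarrow> 0"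
    using complete[of v] vH minimizing_sequence_hCauchy[OF V g v d lim_d] by blast
  have "hdist g l = d"
    using LIMSEQ_unique[OF tendsto_hdist[OF g vH l lim] lim_d] .
  have "ip (\<lambda>x. g x - l x) w = 0" if w: "w \<in> V" for w
  proof (rule ip_eq_0_if_minimal)
    have wH: "w \<in> H"
      using is_subspaceD(1)[OF V] w by blast
    show "hnorm ip (\<lambda>x. g x - l x) \<le> hnorm ip (\<lambda>x. (g x - l x) + t * w x)" for t
    proof -
      have "(\<lambda>n. hdist (\<lambda>x. v n x + (- t) * w x) (\<lambda>x. l x + (- t) * w x)) \<longlonglongrightarrow> 0"
        using lim by simp
      then have "(\<lambda>n. hdist g (\<lambda>x. v n x + (- t) * w x)) \<longlonglongrightarrow> hdist g (\<lambda>x. l x + (- t) * w x)"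
        by (rule tendsto_hdist[OF g add_scale_mem[OF vH wH] add_scale_mem[OF l wH]])
      moreover have "(\<lambda>x. v n x + (- t) * w x) \<in> V" for n
        using is_subspaceD(3,4)[OF V] v w by blast
      ultimately have "d \<le> hdist g (\<lambda>x. l x + (- t) * w x)"
        using d by (intro LIMSEQ_le_const) auto
      then show ?thesis
        using \<open>hdist g l = d\<close> by (simp add: algebra_simps)
    qed
    show "(\<lambda>x. g x - l x) \<in> H"
      using g l by (rule diff_mem)
    show "w \<in> H"
      by (fact wH)
  qed
  with that v l lim show thesis by blast
qed

lemma unitary_opI:
  assumes T: "\<And>f. f \<in> H \<Longrightarrow> T f \<in> H" and S: "\<And>f. f \<in> H \<Longrightarrow> S f \<in> H"
    and add: "\<And>f g. f \<in> H \<Longrightarrow> g \<in> H \<Longrightarrow> T (\<lambda>x. f x + g x) = (\<lambda>x. T f x + T g x)"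
    and scale: "\<And>c f. f \<in> H \<Longrightarrow> T (\<lambda>x. c * f x) = (\<lambda>x. c * T f x)"
    and ip_T: "\<And>f g. f \<in> H \<Longrightarrow> g \<in> H \<Longrightarrow> ip (T f) (T g) = ip f g"
    and TS: "\<And>f. f \<in> H \<Longrightarrow> T (S f) = f" and ST: "\<And>f. f \<in> H \<Longrightarrow> S (T f) = f"
  shows "unitary_op H ip T"
  unfolding unitary_op_def
proof (intro conjI)
  show "\<exists>C. \<forall>f\<in>H. hnorm ip (T f) \<le> C * hnorm ip f"
    using ip_T by (intro exI[of _ 1]) (simp add: hnorm_def)
  have "ip (T f) g = ip f (S g)" if "f \<in> H" "g \<in> H" for f g
    using ip_T[OF that(1) S[OF that(2)]] TS[OF that(2)] by simp
  then show "\<exists>S. (\<forall>g\<in>H. S g \<in> H) \<and> (\<forall>f\<in>H. \<forall>g\<in>H. ip (T f) g = ip f (S g)) \<and>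
      (\<forall>f\<in>H. T (S f) = f \<and> S (T f) = f)"
    using S TS ST by blast
qed (use T add scale in blast)+

end

section \<open>Reproducing kernel Hilbert spaces\<close>

inductive_set ksec_span :: "'a set \<Rightarrow> ('a \<Rightarrow> 'a \<Rightarrow> complex) \<Rightarrow> ('a \<Rightarrow> complex) set"
  for X K where
  zero: "(\<lambda>x. 0) \<in> ksec_span X K"
| add_ksec: "v \<in> ksec_span X K \<Longrightarrow> y \<in> X \<Longrightarrow> (\<lambda>x. v x + c * ksec X K y x) \<in> ksec_span X K"

lemma ksec_span_add: "v \<in> ksec_span X K \<Longrightarrow> u \<in> ksec_span X K \<Longrightarrow> (\<lambda>x. u x + v x) \<in> ksec_span X K"
proof (induction v rule: ksec_span.induct)
  case zero
  then show ?case by simp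
next
  case (add_ksec v y c)
  then have "(\<lambda>x. (u x + v x) + c * ksec X K y x) \<in> ksec_span X K"
    by (intro ksec_span.add_ksec)
  then show ?case by (simp add: add.assoc)
qed

lemma ksec_span_scale: "v \<in> ksec_span X K \<Longrightarrow> (\<lambda>x. a * v x) \<in> ksec_span X K"
proof (induction v rule: ksec_span.induct)
  case zero
  then show ?case by (simp add: ksec_span.zero)
next
  case (add_ksec v y c)
  then have "(\<lambda>x. a * v x + (a * c) * ksec X K y x) \<in> ksec_span X K"
    by (intro ksec_span.add_ksec)
  then show ?case by (simp add: algebra_simps)
qed

locale rkhs = fun_hilbert_space H ip
  for X :: "'a set" and H :: "('a \<Rightarrow> complex) set" and ip +
  fixes K :: "'a \<Rightarrow> 'a \<Rightarrow> complex"
  assumes vanish_outside: "f \<in> H \<Longrightarrow> x \<notin> X \<Longrightarrow> f x = 0"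
    and ksec_mem: "y \<in> X \<Longrightarrow> ksec X K y \<in> H"
    and reproducing: "f \<in> H \<Longrightarrow> y \<in> X \<Longrightarrow> f y = ip f (ksec X K y)"

lemma is_rkhs_imp_rkhs:
  assumes "is_rkhs X H ip K"
  shows "rkhs X H ip K"
proof unfold_locales
  show "f x = 0" if "f \<in> H" "x \<notin> X" for f x
    using assms that unfolding is_rkhs_def by metis
qed (use assms[unfolded is_rkhs_def] in blast)+

context rkhs
begin

lemma eq_if_eq_on_X: "f \<in> H \<Longrightarrow> g \<in> H \<Longrightarrow> (\<And>x. x \<in> X \<Longrightarrow> f x = g x) \<Longrightarrow> f = g"
  using vanish_outside by (metis ext)

lemma ip_ksec_ksec: "x \<in> X \<Longrightarrow> y \<in> X \<Longrightarrow> ip (ksec X K y) (ksec X K x) = K x y"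
  using reproducing[OF ksec_mem] by (simp add: ksec_def)

lemma tendsto_eval:
  assumes "\<And>n. s n \<in> H" "f \<in> H" "y \<in> X" and lim: "(\<lambda>n. hdist (s n) f) \<longlonglongrightarrow> 0"
  shows "(\<lambda>n. s n y) \<longlonglongrightarrow> f y"
proof -
  have "(\<lambda>n. cnj (ip (ksec X K y) (s n))) \<longlonglongrightarrow> cnj (ip (ksec X K y) f)"
    using tendsto_ip_right[OF ksec_mem[OF assms(3)] assms(1,2) lim] by (rule tendsto_cnj)
  moreover have "h y = cnj (ip (ksec X K y) h)" if "h \<in> H" for h
    using reproducing[OF that assms(3)] ip_commute[OF ksec_mem[OF assms(3)] that] by simp
  ultimately show ?thesis
    using assms(1,2) by simp
qed

lemma ksec_span_subset: "ksec_span X K \<subseteq> H"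
proof
  fix v assume "v \<in> ksec_span X K"
  then show "v \<in> H"
    by (induction v rule: ksec_span.induct) (auto intro: zero_mem add_scale_mem ksec_mem)
qed

lemma ksec_span_subspace: "is_subspace (ksec_span X K)"
  unfolding is_subspace_def using ksec_span_subset ksec_span.zero ksec_span_add ksec_span_scale by blast

lemma ksec_span_dense:
  assumes g: "g \<in> H"
  obtains v where "\<And>n. v n \<in> ksec_span X K" "(\<lambda>n. hdist (v n) g) \<longlonglongrightarrow> 0"
proof -
  obtain v l where v: "\<And>n. v n \<in> ksec_span X K" and l: "l \<in> H"
    and lim: "(\<lambda>n. hdist (v n) l) \<longlonglongrightarrow> 0"
    and orth: "\<And>w. w \<in> ksec_span X K \<Longrightarrow> ip (\<lambda>x. g x - l x) w = 0"
    using orthogonal_projection_onto_closure[OF ksec_span_subspace g] by blast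
  have "ksec X K y \<in> ksec_span X K" if "y \<in> X" for y
    using ksec_span.add_ksec[OF ksec_span.zero that, of 1] by simp
  then have "g y - l y = 0" if "y \<in> X" for y
    using orth reproducing[OF diff_mem[OF g l] that] that by simp
  then have "g = l"
    using eq_if_eq_on_X[OF g l] by simp
  with that v lim show thesis by blast
qed

end

section \<open>Koopman operators\<close>

lemma koopman_add_scale: "koopman X F (\<lambda>x. f x + c * g x) = (\<lambda>x. koopman X F f x + c * koopman X F g x)"
  by (auto simp: koopman_def)

lemma koopman_diff: "koopman X F (\<lambda>x. f x - g x) = (\<lambda>x. koopman X F f x - koopman X F g x)"
  by (auto simp: koopman_def)

lemma koopman_zero: "koopman X F (\<lambda>x. 0) = (\<lambda>x. 0)"
  by (auto simp: koopman_def)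

lemma koopman_koopman:
  assumes "\<And>x. x \<in> X \<Longrightarrow> F x \<in> X \<and> G (F x) = x" and "\<And>x. x \<notin> X \<Longrightarrow> f x = 0"
  shows "koopman X F (koopman X G f) = f"
  using assms by (auto simp: koopman_def)

definition kernel_invariant :: "'a set \<Rightarrow> ('a \<Rightarrow> 'a \<Rightarrow> complex) \<Rightarrow> ('a \<Rightarrow> 'a) \<Rightarrow> bool" where
  "kernel_invariant X K F \<longleftrightarrow> (\<forall>x\<in>X. \<forall>y\<in>X. K (F x) (F y) = K x y)"

lemma koopman_ksec:
  assumes "F ` X \<subseteq> X" "kernel_invariant X K F" "x \<in> X"
  shows "koopman X F (ksec X K (F x)) = ksec X K x"
  using assms by (auto simp: koopman_def ksec_def kernel_invariant_def fun_eq_iff image_subset_iff)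

lemma kernel_invariant_inv_into:
  assumes bij: "bij_betw F X X" and inv: "kernel_invariant X K F"
  shows "kernel_invariant X K (inv_into X F)"
  unfolding kernel_invariant_def
proof (intro ballI)
  fix x y assume "x \<in> X" "y \<in> X"
  moreover have "inv_into X F ` X = X"
    using bij_betw_inv_into[OF bij] by (rule bij_betw_imp_surj_on)
  ultimately show "K (inv_into X F x) (inv_into X F y) = K x y"
    using inv bij_betw_inv_into_right[OF bij] unfolding kernel_invariant_def by (metis imageI)
qed

context rkhs
begin

lemma ip_koopman_ksec:
  assumes "f \<in> H" "koopman X F f \<in> H" "x \<in> X" "F x \<in> X"
  shows "ip (koopman X F f) (ksec X K x) = ip f (ksec X K (F x))"
proof -
  have "ip (koopman X F f) (ksec X K x) = koopman X F f x"
    by (rule reproducing[OF assms(2,3), symmetric])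
  also have "\<dots> = f (F x)"
    using assms(3) by (simp add: koopman_def)
  also have "\<dots> = ip f (ksec X K (F x))"
    by (rule reproducing[OF assms(1,4)])
  finally show ?thesis .
qed

lemma koopman_ksec_span:
  assumes FX: "F ` X = X" and inv: "kernel_invariant X K F" and w: "w \<in> ksec_span X K"
  shows "koopman X F w \<in> ksec_span X K"
  using w
proof (induction w rule: ksec_span.induct)
  case zero
  then show ?case by (simp add: koopman_zero ksec_span.zero)
next
  case (add_ksec w y c)
  then obtain x where "x \<in> X" "y = F x"
    using FX by blast
  then show ?case
    using add_ksec koopman_ksec[OF _ inv] FX
    by (simp add: koopman_add_scale ksec_span.add_ksec)
qed

lemma ip_koopman_ksec_span:
  assumes FX: "F ` X = X" and inv: "kernel_invariant X K F"
    and f: "f \<in> H" "koopman X F f \<in> H" and w: "w \<in> ksec_span X K"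
  shows "ip (koopman X F f) (koopman X F w) = ip f w"
  using w
proof (induction w rule: ksec_span.induct)
  case zero
  then show ?case
    using f by (simp add: koopman_zero ip_zero_right)
next
  case (add_ksec w y c)
  obtain x where x: "x \<in> X" "y = F x"
    using FX add_ksec.hyps(2) by blast
  then have Fx: "F x \<in> X"
    using FX by blast
  have wH: "w \<in> H" and TwH: "koopman X F w \<in> H"
    using add_ksec.hyps(1) koopman_ksec_span[OF FX inv] ksec_span_subset by blast+
  have "koopman X F (\<lambda>z. w z + c * ksec X K y z) = (\<lambda>z. koopman X F w z + c * ksec X K x z)"
    using koopman_ksec[OF _ inv x(1)] FX x(2) by (simp add: koopman_add_scale)
  then have "ip (koopman X F f) (koopman X F (\<lambda>z. w z + c * ksec X K y z))
      = ip (koopman X F f) (koopman X F w) + cnj c * ip (koopman X F f) (ksec X K x)"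
    using ip_add_scale_right[OF TwH ksec_mem[OF x(1)] f(2)] by simp
  also have "\<dots> = ip f w + cnj c * ip f (ksec X K y)"
    using add_ksec.IH ip_koopman_ksec[OF f x(1) Fx] x(2) by simp
  also have "\<dots> = ip f (\<lambda>z. w z + c * ksec X K y z)"
    using ip_add_scale_right[OF wH ksec_mem[OF add_ksec.hyps(2)] f(1)] by simp
  finally show ?case .
qed

lemma hnorm_koopman_ksec_span:
  assumes "F ` X = X" "kernel_invariant X K F" "v \<in> ksec_span X K"
  shows "hnorm ip (koopman X F v) = hnorm ip v"
proof -
  have "v \<in> H" "koopman X F v \<in> H"
    using koopman_ksec_span[OF assms] assms(3) ksec_span_subset by blast+
  then show ?thesis
    using ip_koopman_ksec_span[OF assms(1,2) _ _ assms(3)] by (simp add: hnorm_def)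
qed

lemma koopman_mem_tendsto:
  assumes FX: "F ` X = X" and inv: "kernel_invariant X K F" and g: "g \<in> H"
    and v: "\<And>n. v n \<in> ksec_span X K" and lim: "(\<lambda>n. hdist (v n) g) \<longlonglongrightarrow> 0"
  shows "koopman X F g \<in> H" "(\<lambda>n. hdist (koopman X F (v n)) (koopman X F g)) \<longlonglongrightarrow> 0"
proof -
  let ?T = "koopman X F"
  have vH: "v n \<in> H" and TvH: "?T (v n) \<in> H" for n
    using v koopman_ksec_span[OF FX inv] ksec_span_subset by blast+
  have "hdist (?T (v m)) (?T (v n)) = hdist (v m) (v n)" for m n
    using hnorm_koopman_ksec_span[OF FX inv is_subspace_diff[OF ksec_span_subspace v v]]
    by (simp add: koopman_diff)
  then have "hCauchy (\<lambda>n. ?T (v n))"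
    using convergent_imp_hCauchy[OF vH g lim] by simp
  then obtain h where h: "h \<in> H" and lim_h: "(\<lambda>n. hdist (?T (v n)) h) \<longlonglongrightarrow> 0"
    using complete[of "\<lambda>n. ?T (v n)"] TvH by blast
  have "h x = ?T g x" for x
  proof (cases "x \<in> X")
    case True
    then have "F x \<in> X"
      using FX by blast
    have "(\<lambda>n. ?T (v n) x) \<longlonglongrightarrow> h x"
      using tendsto_eval[OF TvH h True lim_h] .
    moreover have "(\<lambda>n. ?T (v n) x) \<longlonglongrightarrow> ?T g x"
      using tendsto_eval[OF vH g \<open>F x \<in> X\<close> lim] True by (simp add: koopman_def)
    ultimately show ?thesis
      by (rule LIMSEQ_unique)
  next
    case False
    then show ?thesis
      using vanish_outside[OF h] by (simp add: koopman_def)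
  qed
  then have "h = ?T g"
    by (rule ext)
  then show "?T g \<in> H" "(\<lambda>n. hdist (?T (v n)) (?T g)) \<longlonglongrightarrow> 0"
    using h lim_h by simp_all
qed

lemma koopman_mem:
  assumes "F ` X = X" "kernel_invariant X K F" "g \<in> H"
  shows "koopman X F g \<in> H"
  using ksec_span_dense[OF assms(3)] koopman_mem_tendsto(1)[OF assms] by metis

lemma ip_koopman:
  assumes FX: "F ` X = X" and inv: "kernel_invariant X K F" and f: "f \<in> H" and g: "g \<in> H"
  shows "ip (koopman X F f) (koopman X F g) = ip f g"
proof -
  let ?T = "koopman X F"
  obtain v where v: "\<And>n. v n \<in> ksec_span X K" and lim: "(\<lambda>n. hdist (v n) g) \<longlonglongrightarrow> 0"
    using ksec_span_dense[OF g] by blast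
  have vH: "v n \<in> H" and TvH: "?T (v n) \<in> H" for n
    using v koopman_ksec_span[OF FX inv] ksec_span_subset by blast+
  have Tf: "?T f \<in> H" and Tg: "?T g \<in> H"
    using koopman_mem[OF FX inv] f g by blast+
  have "(\<lambda>n. ip (?T f) (?T (v n))) \<longlonglongrightarrow> ip (?T f) (?T g)"
    using tendsto_ip_right[OF Tf TvH Tg koopman_mem_tendsto(2)[OF FX inv g v lim]] .
  moreover have "(\<lambda>n. ip (?T f) (?T (v n))) = (\<lambda>n. ip f (v n))"
    using ip_koopman_ksec_span[OF FX inv f Tf v] by simp
  moreover have "(\<lambda>n. ip f (v n)) \<longlonglongrightarrow> ip f g"
    using tendsto_ip_right[OF f vH g lim] .
  ultimately show ?thesis
    using LIMSEQ_unique by metis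
qed

lemma koopman_adjoint_ksec:
  assumes T: "\<And>f. f \<in> H \<Longrightarrow> koopman X F f \<in> H" and S: "\<And>g. g \<in> H \<Longrightarrow> S g \<in> H"
    and adj: "\<And>f g. f \<in> H \<Longrightarrow> g \<in> H \<Longrightarrow> ip (koopman X F f) g = ip f (S g)"
    and y: "y \<in> X" "F y \<in> X"
  shows "S (ksec X K y) = ksec X K (F y)"
proof -
  let ?u = "\<lambda>x. S (ksec X K y) x - ksec X K (F y) x"
  have Sk: "S (ksec X K y) \<in> H" and k: "ksec X K (F y) \<in> H"
    using S ksec_mem y by blast+
  then have u: "?u \<in> H"
    by (rule diff_mem)
  have "ip ?u (S (ksec X K y)) = ip (koopman X F ?u) (ksec X K y)"
    using adj[OF u ksec_mem[OF y(1)]] by simp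
  also have "\<dots> = ip ?u (ksec X K (F y))"
    using ip_koopman_ksec[OF u T[OF u] y] .
  finally have "ip ?u ?u = 0"
    using ip_diff_right[OF Sk k u] by simp
  then have "?u = (\<lambda>x. 0)"
    using ip_self_eq_0[OF u] by blast
  then show ?thesis
    by (simp add: fun_eq_iff)
qed

lemma unitary_koopman_imp_kernel_invariant:
  assumes FX: "F ` X \<subseteq> X" and U: "unitary_op H ip (koopman X F)"
  shows "kernel_invariant X K F"
  unfolding kernel_invariant_def
proof (intro ballI)
  fix x y assume x: "x \<in> X" and y: "y \<in> X"
  obtain S where S: "\<And>g. g \<in> H \<Longrightarrow> S g \<in> H"
    and adj: "\<And>f g. f \<in> H \<Longrightarrow> g \<in> H \<Longrightarrow> ip (koopman X F f) g = ip f (S g)"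
    and TS: "\<And>f. f \<in> H \<Longrightarrow> koopman X F (S f) = f"
    using U unfolding unitary_op_def by metis
  have T: "koopman X F f \<in> H" if "f \<in> H" for f
    using U that unfolding unitary_op_def by blast
  have Sk: "S (ksec X K z) = ksec X K (F z)" if "z \<in> X" for z
    using koopman_adjoint_ksec[OF T S adj that] FX that by blast
  have "K x y = ip (koopman X F (S (ksec X K y))) (ksec X K x)"
    using ip_ksec_ksec[OF x y] TS[OF ksec_mem[OF y]] by simp
  also have "\<dots> = ip (S (ksec X K y)) (S (ksec X K x))"
    using adj[OF S] ksec_mem x y by blast
  also have "\<dots> = K (F x) (F y)"
    using Sk[OF x] Sk[OF y] ip_ksec_ksec FX x y by (simp add: image_subset_iff)
  finally show "K (F x) (F y) = K x y" ..
qed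

lemma kernel_invariant_imp_unitary_koopman:
  assumes bij: "bij_betw F X X" and inv: "kernel_invariant X K F"
  shows "unitary_op H ip (koopman X F)"
proof (rule unitary_opI)
  let ?G = "inv_into X F"
  have FX: "F ` X = X" and GX: "?G ` X = X"
    using bij bij_betw_inv_into[OF bij] by (simp_all add: bij_betw_imp_surj_on)
  have inv_G: "kernel_invariant X K ?G"
    using bij inv by (rule kernel_invariant_inv_into)
  show "koopman X F f \<in> H" if "f \<in> H" for f
    using koopman_mem[OF FX inv that] .
  show "koopman X ?G f \<in> H" if "f \<in> H" for f
    using koopman_mem[OF GX inv_G that] .
  show "ip (koopman X F f) (koopman X F g) = ip f g" if "f \<in> H" "g \<in> H" for f g
    using ip_koopman[OF FX inv that] .
  show "koopman X F (koopman X ?G f) = f" "koopman X ?G (koopman X F f) = f" if "f \<in> H" for f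
    using FX GX bij_betw_inv_into_left[OF bij] bij_betw_inv_into_right[OF bij] vanish_outside[OF that]
    by (auto intro!: koopman_koopman)
qed (auto simp: koopman_def)

lemma unitary_koopman_iff_kernel_invariant:
  assumes "bij_betw F X X"
  shows "unitary_op H ip (koopman X F) \<longleftrightarrow> kernel_invariant X K F"
  using unitary_koopman_imp_kernel_invariant kernel_invariant_imp_unitary_koopman assms
    bij_betw_imp_surj_on by blast

end

lemma radial_kernel_invariant_iff_isometry:
  fixes X :: "'a::real_normed_vector set"
  assumes radial: "\<forall>x\<in>X. \<forall>y\<in>X. K x y = K0 (norm (x - y))" and inj: "inj_on K0 {0..}"
    and FX: "F ` X \<subseteq> X"
  shows "kernel_invariant X K F \<longleftrightarrow> (\<forall>x\<in>X. \<forall>y\<in>X. norm (F x - F y) = norm (x - y))"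
proof -
  have "K (F x) (F y) = K x y \<longleftrightarrow> norm (F x - F y) = norm (x - y)" if "x \<in> X" "y \<in> X" for x y
    using radial FX that inj_on_eq_iff[OF inj] by (simp add: image_subset_iff)
  then show ?thesis
    unfolding kernel_invariant_def by blast
qed

theorem mainTheorem19:
  fixes X :: "'a::real_normed_vector set"
    and H :: "('a \<Rightarrow> complex) set"
    and ip :: "('a \<Rightarrow> complex) \<Rightarrow> ('a \<Rightarrow> complex) \<Rightarrow> complex"
    and K :: "'a \<Rightarrow> 'a \<Rightarrow> complex"
    and K0 :: "real \<Rightarrow> complex"
    and F :: "'a \<Rightarrow> 'a"
  assumes "is_rkhs X H ip K"
    and "\<forall>x\<in>X. \<forall>y\<in>X. K x y = K0 (norm (x - y))"
    and "inj_on K0 {0..}"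
    and "bij_betw F X X"
  shows "unitary_op H ip (koopman X F) \<longleftrightarrow>
         (\<forall>x\<in>X. \<forall>y\<in>X. norm (F x - F y) = norm (x - y))"
proof -
  interpret rkhs X H ip K
    using assms(1) by (rule is_rkhs_imp_rkhs)
  have "F ` X \<subseteq> X"
    using assms(4) by (simp add: bij_betw_def)
  have "unitary_op H ip (koopman X F) \<longleftrightarrow> kernel_invariant X K F"
    using assms(4) by (rule unitary_koopman_iff_kernel_invariant)
  also have "\<dots> \<longleftrightarrow> (\<forall>x\<in>X. \<forall>y\<in>X. norm (F x - F y) = norm (x - y))"
    using assms(2,3) \<open>F ` X \<subseteq> X\<close> by (rule radial_kernel_invariant_iff_isometry)
  finally show ?thesis .
qed

end
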